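(* Let $B>0$ and let $\mu$ be a finite Borel measure on $[-B,B]^d$ with uncountable support $\operatorname{supp}\mu$. For $x^*,v\in\mathbb{R}^d$ with $v\ne0$ define $H_\pm(x^*,v)=x^*+H_\pm(v)$, where $H_+(v)=\{x\in\mathbb{R}^d:\langle x,v\rangle>0\}$ and $H_-(v)=\{x\in\mathbb{R}^d:\langle x,v\rangle<0\}$. Then there exist $x^*\in[-B,B]^d$ and $v\in S^{d-1}$ such that the following holds: if $f:[-B,B]^d\to\mathbb{R}$ satisfies $f(x)=c$ for $x\in H_+(x^*,v)$ and $f(x)=c'$ for $x\in H_-(x^*,v)$ (restricted to $[-B,B]^d$) with constants $c\ne c'$, then there is no continuous $g:[-B,B]^d\to\mathbb{R}$ with $f=g$ $\mu$-almost everywhere.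
   Context: $S^{d-1}$ denotes the Euclidean unit sphere in $\mathbb{R}^d$ and $\langle\cdot,\cdot\rangle$ the Euclidean inner product. *)

theory Defs
  imports "HOL-Analysis.Analysis"
begin

definition cube :: "real \<Rightarrow> 'a::euclidean_space set" where
  "cube B = {x. \<forall>i\<in>Basis. \<bar>x \<bullet> i\<bar> \<le> B}"

definition msupp :: "'a::metric_space measure \<Rightarrow> 'a set" where
  "msupp M = {x. \<forall>e>0. emeasure M (ball x e) > 0}"

definition Hplus :: "'a::real_inner \<Rightarrow> 'a \<Rightarrow> 'a set" where
  "Hplus xs v = {x. (x - xs) \<bullet> v > 0}"
definition Hminus :: "'a::real_inner \<Rightarrow> 'a \<Rightarrow> 'a set" where
  "Hminus xs v = {x. (x - xs) \<bullet> v < 0}"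

end

theory Submission
  imports Defs
begin

text \<open>Some coordinate projection of the uncountable set \<open>msupp \<mu>\<close> is uncountable. Only countably
  many values of a real function can be local extrema on a set in a second countable space, so
  some point \<open>x\<^sup>*\<close> of the support has support points on both sides of the hyperplane through
  \<open>x\<^sup>*\<close> orthogonal to that coordinate axis, arbitrarily close to \<open>x\<^sup>*\<close>. Every open set around a
  support point has positive measure, so the points where \<open>f = g\<close> accumulate at \<open>x\<^sup>*\<close> from
  both half-spaces, and continuity forces \<open>g x\<^sup>* = c\<close> and \<open>g x\<^sup>* = c'\<close>.\<close>

lemma uncountable_image_inner_Basis:
  fixes S :: "'a::euclidean_space set"
  assumes "uncountable S"
  shows "\<exists>i\<in>Basis. uncountable ((\<lambda>x. x \<bullet> i) ` S)"
proof (rule ccontr)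
  assume "\<not> ?thesis"
  hence c: "\<And>i. i \<in> Basis \<Longrightarrow> countable ((\<lambda>x. x \<bullet> i) ` S)" by blast
  let ?h = "\<lambda>x. restrict (\<lambda>i. x \<bullet> i) Basis"
  have "?h ` S \<subseteq> Pi\<^sub>E Basis (\<lambda>i. (\<lambda>x. x \<bullet> i) ` S)" by auto
  moreover have "countable (Pi\<^sub>E Basis (\<lambda>i. (\<lambda>x. x \<bullet> i) ` S))"
    by (rule countable_PiE) (auto intro: c)
  ultimately have "countable (?h ` S)" by (rule countable_subset)
  moreover have "inj_on ?h S"
  proof (rule inj_onI)
    fix x y :: 'a assume "x \<in> S" "y \<in> S" and h: "?h x = ?h y"
    have "x \<bullet> i = y \<bullet> i" if "i \<in> Basis" for i using fun_cong[OF h, of i] that by simp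
    thus "x = y" by (rule euclidean_eqI)
  qed
  ultimately have "countable S" by (rule countable_image_inj_on)
  with assms show False by simp
qed

lemma countable_local_max_values:
  fixes f :: "'a::second_countable_topology \<Rightarrow> real"
  shows "countable (f ` {x\<in>S. \<exists>U. open U \<and> x \<in> U \<and> (\<forall>z\<in>S \<inter> U. f z \<le> f x)})"
proof -
  obtain \<B> :: "'a set set" where \<B>: "countable \<B>" "topological_basis \<B>"
    using ex_countable_basis by blast
  have "f ` {x\<in>S. \<exists>U. open U \<and> x \<in> U \<and> (\<forall>z\<in>S \<inter> U. f z \<le> f x)}
          \<subseteq> (\<lambda>C. Sup (f ` (S \<inter> C))) ` \<B>"
  proof
    fix t assume "t \<in> f ` {x\<in>S. \<exists>U. open U \<and> x \<in> U \<and> (\<forall>z\<in>S \<inter> U. f z \<le> f x)}"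
    then obtain x U where x: "x \<in> S" "t = f x" and U: "open U" "x \<in> U" "\<forall>z\<in>S \<inter> U. f z \<le> f x"
      by blast
    obtain C where C: "C \<in> \<B>" "x \<in> C" "C \<subseteq> U"
      using topological_basisE[OF \<B>(2) U(1,2)] by blast
    have "Sup (f ` (S \<inter> C)) = f x"
      using x(1) C(2,3) U(3) by (intro cSup_eq_maximum) auto
    thus "t \<in> (\<lambda>C. Sup (f ` (S \<inter> C))) ` \<B>" using x(2) by (intro rev_image_eqI[OF C(1)]) simp
  qed
  thus ?thesis using \<B>(1) by (rule countable_subset[OF _ countable_image])
qed

lemma uncountable_image_two_sided_point:
  fixes f :: "'a::second_countable_topology \<Rightarrow> real"
  assumes "uncountable (f ` S)"
  obtains x where "x \<in> S" "x \<in> closure {z\<in>S. f x < f z}" "x \<in> closure {z\<in>S. f z < f x}"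
proof (rule ccontr)
  define local_max where "local_max h = {x\<in>S. \<exists>U. open U \<and> x \<in> U \<and> (\<forall>z\<in>S \<inter> U. h z \<le> h x)}"
    for h :: "'a \<Rightarrow> real"
  have local_maxI: "x \<in> local_max h" if "x \<in> S" "x \<notin> closure {z\<in>S. h x < h z}" for x h
  proof -
    have "\<forall>z\<in>S \<inter> - closure {z\<in>S. h x < h z}. h z \<le> h x"
      using closure_subset[of "{z\<in>S. h x < h z}"] by (auto simp: not_less)
    thus ?thesis unfolding local_max_def using that by blast
  qed
  assume "\<not> thesis"
  hence "S \<subseteq> local_max f \<union> local_max (\<lambda>x. - f x)"
    using that local_maxI[of _ f] local_maxI[of _ "\<lambda>x. - f x"] by auto
  hence cover: "f ` S \<subseteq> f ` local_max f \<union> uminus ` ((\<lambda>x. - f x) ` local_max (\<lambda>x. - f x))"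
    by (auto simp: image_image)
  have "countable (f ` local_max f)" "countable ((\<lambda>x. - f x) ` local_max (\<lambda>x. - f x))"
    unfolding local_max_def by (rule countable_local_max_values)+
  hence "countable (f ` local_max f \<union> uminus ` ((\<lambda>x. - f x) ` local_max (\<lambda>x. - f x)))"
    by (intro countable_Un countable_image[of _ uminus])
  hence "countable (f ` S)" by (rule countable_subset[OF cover])
  with assms show False by simp
qed

lemma msupp_open_AE_witness:
  assumes "sets \<mu> = sets borel" "z \<in> msupp \<mu>" "open U" "z \<in> U" "AE y in \<mu>. P y"
  shows "\<exists>y\<in>U. P y"
proof (rule ccontr)
  assume none: "\<not> (\<exists>y\<in>U. P y)"
  obtain r where r: "r > 0" "ball z r \<subseteq> U" using assms(3,4) open_contains_ball by blast
  have space: "space \<mu> = UNIV" using assms(1) sets_eq_imp_space_eq by fastforce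
  have "(AE y in \<mu>. y \<notin> ball z r) \<longleftrightarrow> emeasure \<mu> (ball z r) = 0"
    by (rule AE_iff_measurable) (use assms(1) space in auto)
  moreover have "AE y in \<mu>. y \<notin> ball z r"
    using assms(5) by eventually_elim (use none r(2) in blast)
  ultimately have "emeasure \<mu> (ball z r) = 0" by blast
  moreover have "emeasure \<mu> (ball z r) > 0" using assms(2) r(1) unfolding msupp_def by blast
  ultimately show False by simp
qed

lemma AE_mem_closed_conull:
  assumes "sets \<mu> = sets borel" "closed C" "emeasure \<mu> (UNIV - C) = 0"
  shows "AE y in \<mu>. y \<in> C"
proof -
  have "UNIV - C \<in> sets \<mu>" using assms(1,2) by (simp add: borel_open open_Diff)
  hence "UNIV - C \<in> null_sets \<mu>" using assms(3) by (rule null_setsI[rotated])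
  thus ?thesis by (rule AE_I') auto
qed

lemma msupp_subset_closed:
  assumes "sets \<mu> = sets borel" "closed C" "emeasure \<mu> (UNIV - C) = 0"
  shows "msupp \<mu> \<subseteq> C"
proof
  fix z assume z: "z \<in> msupp \<mu>"
  show "z \<in> C"
  proof (rule ccontr)
    assume "z \<notin> C"
    have "\<exists>y\<in>UNIV - C. y \<in> C"
      by (rule msupp_open_AE_witness[OF assms(1) z _ _ AE_mem_closed_conull[OF assms]])
        (use assms(2) \<open>z \<notin> C\<close> in \<open>auto simp: open_Diff\<close>)
    thus False by blast
  qed
qed

lemma msupp_Int_open_subset_closure_AE:
  assumes "sets \<mu> = sets borel" "open H" "AE y in \<mu>. P y"
  shows "msupp \<mu> \<inter> H \<subseteq> closure {y \<in> H. P y}"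
proof
  fix z assume z: "z \<in> msupp \<mu> \<inter> H"
  show "z \<in> closure {y \<in> H. P y}"
    unfolding closure_approachable
  proof (intro allI impI)
    fix e :: real assume "e > 0"
    then obtain y where "y \<in> ball z e \<inter> H" "P y"
      using z msupp_open_AE_witness[OF assms(1) _ open_Int[OF open_ball assms(2)] _ assms(3)] by force
    thus "\<exists>y\<in>{y \<in> H. P y}. dist y z < e" by (auto simp: dist_commute)
  qed
qed

lemma continuous_on_closed_eq_on_closure:
  fixes g :: "'a::topological_space \<Rightarrow> 'b::t1_space"
  assumes "continuous_on K g" "closed K" "T \<subseteq> K" "\<And>y. y \<in> T \<Longrightarrow> g y = c" "x \<in> closure T"
  shows "g x = c"
proof -
  have "closure T \<subseteq> K" using assms(3,2) by (rule closure_minimal)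
  show ?thesis
    using continuous_on_subset[OF assms(1) \<open>closure T \<subseteq> K\<close>] assms(4,5)
    by (rule continuous_constant_on_closure)
qed

lemma continuous_AE_eq_const_on_closure_msupp:
  fixes g :: "'a::metric_space \<Rightarrow> 'b::t1_space"
  assumes "sets \<mu> = sets borel" "continuous_on K g" "closed K" "AE y in \<mu>. y \<in> K \<and> f y = g y"
    and "open H" "\<forall>y\<in>K \<inter> H. f y = d" "x \<in> closure (msupp \<mu> \<inter> H)"
  shows "g x = d"
proof (rule continuous_on_closed_eq_on_closure[OF assms(2,3)])
  have "closure (msupp \<mu> \<inter> H) \<subseteq> closure {y \<in> H. y \<in> K \<and> f y = g y}"
    using msupp_Int_open_subset_closure_AE[OF assms(1,5,4)] by (rule closure_minimal) simp
  with assms(7) show "x \<in> closure {y \<in> H. y \<in> K \<and> f y = g y}" by blast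
qed (use assms(6) in auto)

lemma closed_cube: "closed (cube B :: 'a::euclidean_space set)"
proof -
  have "cube B = (\<Inter>i\<in>Basis. {x :: 'a. x \<bullet> i \<le> B} \<inter> {x. x \<bullet> i \<ge> - B})"
    unfolding cube_def by (auto simp: abs_le_iff minus_le_iff)
  thus ?thesis
    by (simp add: closed_INT closed_Int closed_halfspace_component_le closed_halfspace_component_ge)
qed

lemma Hplus_eq: "Hplus x v = {z. x \<bullet> v < z \<bullet> v}"
  by (simp add: Hplus_def inner_diff_left)

lemma Hminus_eq: "Hminus x v = {z. z \<bullet> v < x \<bullet> v}"
  by (simp add: Hminus_def inner_diff_left)

lemma open_Hplus: "open (Hplus x v)"
  unfolding Hplus_eq by (rule open_Collect_less) (intro continuous_intros)+

lemma open_Hminus: "open (Hminus x v)"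
  unfolding Hminus_eq by (rule open_Collect_less) (intro continuous_intros)+

theorem lemmaD1:
  fixes B :: real and \<mu> :: "'a::euclidean_space measure"
  assumes "B > 0"
    and "sets \<mu> = sets borel"
    and "finite_measure \<mu>"
    and "emeasure \<mu> (UNIV - cube B) = 0"
    and "uncountable (msupp \<mu>)"
  shows "\<exists>xs\<in>cube B. \<exists>v. norm v = 1 \<and>
    (\<forall>(f :: 'a \<Rightarrow> real) c c'. c \<noteq> c'
       \<and> (\<forall>x\<in>cube B \<inter> Hplus xs v. f x = c)
       \<and> (\<forall>x\<in>cube B \<inter> Hminus xs v. f x = c')
       \<longrightarrow> \<not> (\<exists>g :: 'a \<Rightarrow> real. continuous_on (cube B) g
                 \<and> (AE x in \<mu>. x \<in> cube B \<longrightarrow> f x = g x)))"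
proof -
  obtain v :: 'a where v: "v \<in> Basis" "uncountable ((\<lambda>x. x \<bullet> v) ` msupp \<mu>)"
    using uncountable_image_inner_Basis[OF assms(5)] by blast
  obtain x where x: "x \<in> msupp \<mu>"
    and above: "x \<in> closure (msupp \<mu> \<inter> Hplus x v)" and below: "x \<in> closure (msupp \<mu> \<inter> Hminus x v)"
    using uncountable_image_two_sided_point[OF v(2)] by (auto simp: Hplus_eq Hminus_eq Collect_conj_eq)
  have x_cube: "x \<in> cube B" using x msupp_subset_closed[OF assms(2) closed_cube assms(4)] by blast
  show ?thesis
  proof (intro bexI[OF _ x_cube] exI[of _ v] conjI allI impI notI)
    show "norm v = 1" using v(1) by simp
    fix f :: "'a \<Rightarrow> real" and c c'
    assume f: "c \<noteq> c' \<and> (\<forall>x\<in>cube B \<inter> Hplus x v. f x = c) \<and> (\<forall>x\<in>cube B \<inter> Hminus x v. f x = c')"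
    assume "\<exists>g. continuous_on (cube B) g \<and> (AE x in \<mu>. x \<in> cube B \<longrightarrow> f x = g x)"
    then obtain g where g: "continuous_on (cube B) g" "AE x in \<mu>. x \<in> cube B \<longrightarrow> f x = g x"
      by blast
    from g(2) AE_mem_closed_conull[OF assms(2) closed_cube assms(4)]
    have AE_eq: "AE y in \<mu>. y \<in> cube B \<and> f y = g y" by eventually_elim auto
    note eq_const = continuous_AE_eq_const_on_closure_msupp[OF assms(2) g(1) closed_cube AE_eq]
    have "g x = c" using f above by (intro eq_const[of "Hplus x v"]) (auto simp: open_Hplus)
    moreover have "g x = c'"
      using f below by (intro eq_const[of "Hminus x v"]) (auto simp: open_Hminus)
    ultimately show False using f by simp
  qed
qed

end
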